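(* Let $\bm y=\bm X\bm\beta+\bm z$, where $\bm X\in\mathbb{R}^{n\times p}$ is deterministic of full column rank with unit-norm columns $\bm x_1,\dots,\bm x_p$, $\bm\beta\in\mathbb{R}^p$, and $\bm z\sim N_n(\bm 0,\sigma^2\bm I_n)$. Let $\bm\Sigma=\bm X^\top\bm X$ and, for a fixed $\lambda>0$, $\bm\Sigma_\lambda=\bm\Sigma+\lambda\bm I_p$. Let $\bm s\in\mathbb{R}^p$ have nonnegative entries with $\bm\Sigma-\bm S$ positive semidefinite, where $\bm S=\operatorname{diag}(\bm s)$, and let $\widetilde{\bm X}=[\widetilde{\bm x}_1,\dots,\widetilde{\bm x}_p]\in\mathbb{R}^{n\times p}$ be a fixed (non-random) matrix satisfying $\widetilde{\bm X}^\top\bm X=\bm\Sigma-\bm S$ and $\widetilde{\bm x}_j^\top\widetilde{\bm x}_j=1$ for all $j\in[p]$. Define $\widehat{\bm\beta}_\lambda=\bm\Sigma_\lambda^{-1}\bm X^\top\bm y$ and $\widetilde{\bm\beta}_\lambda\in\mathbb{R}^p$ by $\widetilde\beta_{\lambda j}=\widehat\beta_{\lambda j}+[\bm\Sigma_\lambda^{-1}]_{jj}(\widetilde{\bm x}_j^\top\bm y-\bm x_j^\top\bm y)$, $j\in[p]$. Then $(\widehat{\bm\beta}_\lambda,\widetilde{\bm\beta}_\lambda)$ is jointly Gaussian in $\mathbb{R}^{2p}$ with $\mathbb{E}[\widehat{\bm\beta}_\lambda]=\bm\Sigma_\lambda^{-1}\bm\Sigma\bm\beta$, $\mathbb{E}[\widetilde{\bm\beta}_\lambda]=(\bm\Sigma_\lambda^{-1}\bm\Sigma-\operatorname{diag}\{\bm\Sigma_\lambda^{-1}\}\bm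 S)\bm\beta$, $\mathrm{Cov}[\widehat{\bm\beta}_\lambda]=\sigma^2\bm\Sigma_\lambda^{-1}\bm\Sigma\bm\Sigma_\lambda^{-1}$, $\mathrm{Cov}[\widetilde{\bm\beta}_\lambda]=\sigma^2\big[\bm\Sigma_\lambda^{-1}\bm\Sigma\bm\Sigma_\lambda^{-1}-\bm\Sigma_\lambda^{-1}\bm S\operatorname{diag}\{\bm\Sigma_\lambda^{-1}\}-\operatorname{diag}\{\bm\Sigma_\lambda^{-1}\}\bm S\bm\Sigma_\lambda^{-1}+\operatorname{diag}\{\bm\Sigma_\lambda^{-1}\}(\widetilde{\bm X}^\top\widetilde{\bm X}-\bm\Sigma+2\bm S)\operatorname{diag}\{\bm\Sigma_\lambda^{-1}\}\big]$, and $\mathrm{Cov}[\widetilde{\bm\beta}_\lambda,\widehat{\bm\beta}_\lambda]=\sigma^2(\bm\Sigma_\lambda^{-1}\bm\Sigma\bm\Sigma_\lambda^{-1}-\operatorname{diag}\{\bm\Sigma_\lambda^{-1}\}\bm S\bm\Sigma_\lambda^{-1})$.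
   Context: For a square matrix $\bm A$, $\operatorname{diag}\{\bm A\}$ denotes the diagonal matrix with the same diagonal entries as $\bm A$, and $[\bm A]_{jj}$ its $j$-th diagonal entry. $\mathrm{Cov}[\bm u,\bm v]=\mathbb{E}[(\bm u-\mathbb{E}\bm u)(\bm v-\mathbb{E}\bm v)^\top]$. Equivalently, $\widetilde\beta_{\lambda j}$ is the $j$-th coefficient of the ridge regression (penalty $\lambda$) of $\bm y$ onto $\bm X$ with its $j$-th column replaced by $\widetilde{\bm x}_j$. *)

theory Defs
  imports "HOL-Analysis.Analysis" "HOL-Probability.Probability"
begin

definition diag_mat :: "real^'p \<Rightarrow> real^'p^'p" where
  "diag_mat s = (\<chi> i j. if i = j then s $ i else 0)"

definition diag_part :: "real^'p^'p \<Rightarrow> real^'p^'p" where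
  "diag_part A = (\<chi> i j. if i = j then A $ i $ j else 0)"

definition psd :: "real^'p^'p \<Rightarrow> bool" where
  "psd A \<longleftrightarrow> (\<forall>v. 0 \<le> v \<bullet> (A *v v))"

definition real_gaussian :: "'a measure \<Rightarrow> ('a \<Rightarrow> real) \<Rightarrow> bool" where
  "real_gaussian M X \<longleftrightarrow>
     (X \<in> borel_measurable M \<and> (\<exists>c. AE \<omega> in M. X \<omega> = c)) \<or>
     (\<exists>\<mu> \<sigma>. \<sigma> > 0 \<and> distributed M lborel X (normal_density \<mu> \<sigma>))"

definition jointly_gaussian :: "'a measure \<Rightarrow> ('a \<Rightarrow> real^'p) \<Rightarrow> ('a \<Rightarrow> real^'q) \<Rightarrow> bool" where
  "jointly_gaussian M u v \<longleftrightarrow>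
     (\<forall>a b. real_gaussian M (\<lambda>\<omega>. a \<bullet> u \<omega> + b \<bullet> v \<omega>))"

definition mean_vec :: "'a measure \<Rightarrow> ('a \<Rightarrow> real^'p) \<Rightarrow> real^'p" where
  "mean_vec M u = (\<chi> i. integral\<^sup>L M (\<lambda>\<omega>. u \<omega> $ i))"

definition cov_mat :: "'a measure \<Rightarrow> ('a \<Rightarrow> real^'p) \<Rightarrow> ('a \<Rightarrow> real^'q) \<Rightarrow> real^'q^'p" where
  "cov_mat M u v = (\<chi> i j. integral\<^sup>L M
      (\<lambda>\<omega>. (u \<omega> $ i - mean_vec M u $ i) * (v \<omega> $ j - mean_vec M v $ j)))"

end

theory Submission
  imports Defs
begin

(* Both estimators are affine in the noise: with A = Sigma_lam^-1 X^T and
   B = A + diag{Sigma_lam^-1} (Xt - X)^T one has beta_hat = A X beta + A z and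
   beta_tilde = B X beta + B z.  For z with iid N(0, sigma^2) coordinates every linear
   functional of z is a sum of independent normals, so any such pair is jointly Gaussian,
   with means A X beta, B X beta and cross-covariances sigma^2 A B^T.  The stated formulas
   then follow from Xt^T X = Sigma - S and the symmetry of Sigma_lam^-1 by matrix algebra. *)

lemma matrix_add_rdistrib: "((A::'a::semiring_1^'m^'n) + B) ** (C::'a^'k^'m) = A ** C + B ** C"
  by (simp add: matrix_matrix_mult_def vec_eq_iff sum.distrib distrib_right)

lemma matrix_diff_rdistrib: "((A::'a::ring_1^'m^'n) - B) ** (C::'a^'k^'m) = A ** C - B ** C"
  by (simp add: matrix_matrix_mult_def vec_eq_iff sum_subtractf left_diff_distrib)

lemma matrix_diff_ldistrib: "(C::'a::ring_1^'m^'n) ** ((A::'a^'k^'m) - B) = C ** A - C ** B"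
  by (simp add: matrix_matrix_mult_def vec_eq_iff sum_subtractf right_diff_distrib)

lemma transpose_add: "transpose ((A::'a::plus^'m^'n) + B) = transpose A + transpose B"
  by (simp add: transpose_def vec_eq_iff)

lemma transpose_diff: "transpose ((A::'a::minus^'m^'n) - B) = transpose A - transpose B"
  by (simp add: transpose_def vec_eq_iff)

lemma inner_column: "column j (A::real^'m^'n) \<bullet> v = (transpose A *v v) $ j"
  by (simp add: column_def transpose_def matrix_vector_mult_def inner_vec_def mult.commute)

lemma diag_part_mult_vector_nth: "(diag_part A *v v) $ j = A $ j $ j * v $ j"
  by (simp add: diag_part_def matrix_vector_mult_def if_distrib if_distribR cong: if_cong)

lemma transpose_diag_part: "transpose (diag_part A) = diag_part A"
  by (simp add: diag_part_def transpose_def vec_eq_iff)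

lemma transpose_diag_mat: "transpose (diag_mat s) = diag_mat s"
  by (simp add: diag_mat_def transpose_def vec_eq_iff)

lemma matrix_inv_right_left:
  fixes A :: "'a::semiring_1^'n^'n"
  assumes "invertible A"
  shows "A ** matrix_inv A = mat 1" and "matrix_inv A ** A = mat 1"
proof -
  from assms have "A ** matrix_inv A = mat 1 \<and> matrix_inv A ** A = mat 1"
    unfolding invertible_def matrix_inv_def by (rule someI_ex)
  then show "A ** matrix_inv A = mat 1" and "matrix_inv A ** A = mat 1" by auto
qed

lemma transpose_matrix_inv_symmetric:
  fixes A :: "'a::comm_semiring_1^'n^'n"
  assumes "invertible A" and "transpose A = A"
  shows "transpose (matrix_inv A) = matrix_inv A"
proof -
  have left: "transpose (matrix_inv A) ** A = mat 1"
    using arg_cong[OF matrix_inv_right_left(1)[OF assms(1)], of transpose]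
    by (simp add: matrix_transpose_mul assms(2))
  have "transpose (matrix_inv A) = transpose (matrix_inv A) ** (A ** matrix_inv A)"
    by (simp add: matrix_inv_right_left(1)[OF assms(1)])
  also have "\<dots> = matrix_inv A"
    by (simp add: matrix_mul_assoc left)
  finally show ?thesis .
qed

lemma inner_gram_mult: "v \<bullet> ((transpose X ** X) *v v) = (X *v v) \<bullet> (X *v v)"
  for X :: "real^'p^'n"
proof -
  have "v \<bullet> ((transpose X ** X) *v v) = ((X *v v) v* X) \<bullet> v"
    by (simp add: matrix_vector_mul_assoc[symmetric] inner_commute)
  also have "\<dots> = (X *v v) \<bullet> (X *v v)"
    by (rule dot_lmul_matrix)
  finally show ?thesis .
qed

lemma invertible_gram_plus_scaled_id:
  fixes X :: "real^'p^'n"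
  assumes "lam > 0"
  shows "invertible (transpose X ** X + lam *\<^sub>R mat 1)"
proof -
  have "v = 0" if "(transpose X ** X + lam *\<^sub>R mat 1) *v v = 0" for v
  proof -
    have "(X *v v) \<bullet> (X *v v) + lam * (v \<bullet> v) = v \<bullet> ((transpose X ** X + lam *\<^sub>R mat 1) *v v)"
      by (simp add: matrix_vector_mult_add_rdistrib inner_add_right inner_gram_mult
          scaleR_matrix_vector_assoc[symmetric] del: transpose_matrix_vector)
    also have "\<dots> = 0"
      using that by simp
    finally have "lam * (v \<bullet> v) = 0"
      using assms by (smt (verit) inner_ge_zero mult_nonneg_nonneg)
    then show "v = 0"
      using assms by simp
  qed
  then show ?thesis
    using matrix_left_invertible_ker invertible_left_inverse by blast
qed

locale iid_normal_vector = prob_space +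
  fixes \<sigma> :: real and z :: "'a \<Rightarrow> real^'n::finite"
  assumes sigma_pos: "\<sigma> > 0"
    and indep_components: "indep_vars (\<lambda>_. borel) (\<lambda>i \<omega>. z \<omega> $ i) UNIV"
    and component_distributed: "\<And>i. distributed M lborel (\<lambda>\<omega>. z \<omega> $ i) (normal_density 0 \<sigma>)"
begin

lemma integrable_component: "integrable M (\<lambda>\<omega>. z \<omega> $ i)"
  using distributed_integrable_var[OF component_distributed _ integrable_normal_moment_nz_1[OF sigma_pos]]
  by simp

lemma expectation_component: "expectation (\<lambda>\<omega>. z \<omega> $ i) = 0"
  by (rule normal_distributed_expectation[OF sigma_pos component_distributed])

lemma integrable_component_square: "integrable M (\<lambda>\<omega>. z \<omega> $ i * z \<omega> $ i)"
proof -
  have "integrable lborel (\<lambda>x. normal_density 0 \<sigma> x * (x * x))"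
    using integrable_normal_moment[OF sigma_pos, of 0 2] by (simp add: power2_eq_square)
  then show ?thesis
    using distributed_integrable[OF component_distributed[of i], of "\<lambda>x. x * x"] by simp
qed

lemma expectation_component_square: "expectation (\<lambda>\<omega>. z \<omega> $ i * z \<omega> $ i) = \<sigma>\<^sup>2"
  using normal_distributed_variance[OF sigma_pos component_distributed[of i]] expectation_component
  by (simp add: power2_eq_square)

lemma
  assumes "i \<noteq> j"
  shows integrable_component_mult_distinct: "integrable M (\<lambda>\<omega>. z \<omega> $ i * z \<omega> $ j)"
    and expectation_component_mult_distinct: "expectation (\<lambda>\<omega>. z \<omega> $ i * z \<omega> $ j) = 0"
proof -
  have indep: "indep_vars (\<lambda>_. borel) (\<lambda>i \<omega>. z \<omega> $ i) {i, j}"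
    by (rule indep_vars_subset[OF indep_components]) auto
  have prod: "(\<lambda>\<omega>. \<Prod>k\<in>{i, j}. z \<omega> $ k) = (\<lambda>\<omega>. z \<omega> $ i * z \<omega> $ j)"
    using assms by auto
  have "integrable M (\<lambda>\<omega>. \<Prod>k\<in>{i, j}. z \<omega> $ k)"
    by (rule indep_vars_integrable[OF _ indep]) (auto intro: integrable_component)
  then show "integrable M (\<lambda>\<omega>. z \<omega> $ i * z \<omega> $ j)"
    by (simp only: prod)
  have "expectation (\<lambda>\<omega>. \<Prod>k\<in>{i, j}. z \<omega> $ k) = (\<Prod>k\<in>{i, j}. expectation (\<lambda>\<omega>. z \<omega> $ k))"
    by (rule indep_vars_lebesgue_integral[OF _ indep]) (auto intro: integrable_component)
  then show "expectation (\<lambda>\<omega>. z \<omega> $ i * z \<omega> $ j) = 0"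
    using assms by (simp add: prod expectation_component)
qed

lemma integrable_component_mult: "integrable M (\<lambda>\<omega>. z \<omega> $ i * z \<omega> $ j)"
  using integrable_component_square integrable_component_mult_distinct by (cases "i = j") auto

lemma expectation_component_mult:
  "expectation (\<lambda>\<omega>. z \<omega> $ i * z \<omega> $ j) = (if i = j then \<sigma>\<^sup>2 else 0)"
  using expectation_component_square expectation_component_mult_distinct by (cases "i = j") auto

lemma integrable_inner: "integrable M (\<lambda>\<omega>. w \<bullet> z \<omega>)"
  by (simp add: inner_vec_def integrable_component)

lemma expectation_inner: "expectation (\<lambda>\<omega>. w \<bullet> z \<omega>) = 0"
  by (simp add: inner_vec_def integrable_component expectation_component)

lemma inner_mult_eq_double_sum:
  "(w \<bullet> z \<omega>) * (v \<bullet> z \<omega>) = (\<Sum>i\<in>UNIV. \<Sum>j\<in>UNIV. (w $ i * v $ j) * (z \<omega> $ i * z \<omega> $ j))"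
  unfolding inner_vec_def inner_real_def sum_product by (simp add: algebra_simps)

lemma expectation_inner_mult: "expectation (\<lambda>\<omega>. (w \<bullet> z \<omega>) * (v \<bullet> z \<omega>)) = \<sigma>\<^sup>2 * (w \<bullet> v)"
proof -
  have "expectation (\<lambda>\<omega>. (w \<bullet> z \<omega>) * (v \<bullet> z \<omega>))
      = (\<Sum>i\<in>UNIV. \<Sum>j\<in>UNIV. (w $ i * v $ j) * (if i = j then \<sigma>\<^sup>2 else 0))"
    by (simp add: inner_mult_eq_double_sum integrable_component_mult expectation_component_mult)
  also have "\<dots> = \<sigma>\<^sup>2 * (w \<bullet> v)"
    by (simp add: inner_vec_def sum_distrib_left algebra_simps if_distrib cong: if_cong)
  finally show ?thesis .
qed

lemma distributed_inner:
  assumes "w \<noteq> 0"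
  shows "distributed M lborel (\<lambda>\<omega>. w \<bullet> z \<omega>) (normal_density 0 (\<sigma> * norm w))"
proof -
  define I where "I = {i. w $ i \<noteq> 0}"
  have I: "finite I" "I \<noteq> {}"
    using assms by (auto simp: I_def vec_eq_iff)
  have indep: "indep_vars (\<lambda>_. borel) (\<lambda>i \<omega>. w $ i * z \<omega> $ i) I"
    by (rule indep_vars_compose2[where Y="\<lambda>i x. w $ i * x", OF indep_vars_subset[OF indep_components]])
      auto
  have pos: "0 < \<bar>w $ i\<bar> * \<sigma>" if "i \<in> I" for i
    using that sigma_pos by (simp add: I_def)
  have distr: "distributed M lborel (\<lambda>\<omega>. w $ i * z \<omega> $ i) (normal_density 0 (\<bar>w $ i\<bar> * \<sigma>))"
    if "i \<in> I" for i
    using normal_density_affine[OF component_distributed[of i] sigma_pos, of "w $ i" 0] that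
    by (simp add: I_def)
  have sum_I: "(\<Sum>i\<in>I. f i) = (\<Sum>i\<in>UNIV. f i)" if "\<And>i. w $ i = 0 \<Longrightarrow> f i = 0" for f :: "'n \<Rightarrow> real"
    by (rule sum.mono_neutral_left) (auto simp: I_def that)
  have "sqrt (\<Sum>i\<in>I. (\<bar>w $ i\<bar> * \<sigma>)\<^sup>2) = \<sigma> * norm w"
    using sigma_pos
    by (simp add: sum_I power_mult_distrib norm_vec_def L2_set_def real_sqrt_mult
        sum_distrib_right[symmetric])
  moreover have "(\<lambda>\<omega>. \<Sum>i\<in>I. w $ i * z \<omega> $ i) = (\<lambda>\<omega>. w \<bullet> z \<omega>)"
    by (simp add: sum_I inner_vec_def)
  ultimately show ?thesis
    using sum_indep_normal[OF I indep pos distr] by simp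
qed

lemma real_gaussian_affine_inner: "real_gaussian M (\<lambda>\<omega>. c + w \<bullet> z \<omega>)"
proof (cases "w = 0")
  case True
  then show ?thesis
    by (simp add: real_gaussian_def)
next
  case False
  then have "0 < \<sigma> * norm w"
    using sigma_pos by simp
  then show ?thesis
    using normal_density_affine[OF distributed_inner[OF False], of 1 c] False
    by (auto simp: real_gaussian_def)
qed

lemma mean_vec_affine: "mean_vec M (\<lambda>\<omega>. c + A *v z \<omega>) = c"
  by (simp add: mean_vec_def vec_eq_iff matrix_vector_mul_component integrable_inner
      expectation_inner prob_space)

lemma cov_mat_affine:
  "cov_mat M (\<lambda>\<omega>. c + A *v z \<omega>) (\<lambda>\<omega>. d + B *v z \<omega>) = \<sigma>\<^sup>2 *\<^sub>R (A ** transpose B)"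
  unfolding cov_mat_def mean_vec_affine
  by (simp add: vec_eq_iff matrix_vector_mul_component expectation_inner_mult)
    (simp add: matrix_matrix_mult_def transpose_def inner_vec_def)

lemma jointly_gaussian_affine:
  "jointly_gaussian M (\<lambda>\<omega>. c + A *v z \<omega>) (\<lambda>\<omega>. d + B *v z \<omega>)"
  unfolding jointly_gaussian_def
proof (intro allI)
  fix a b
  have "(\<lambda>\<omega>. a \<bullet> (c + A *v z \<omega>) + b \<bullet> (d + B *v z \<omega>))
      = (\<lambda>\<omega>. (a \<bullet> c + b \<bullet> d) + (a v* A + b v* B) \<bullet> z \<omega>)"
    by (simp add: inner_add_right inner_add_left dot_lmul_matrix algebra_simps)
  then show "real_gaussian M (\<lambda>\<omega>. a \<bullet> (c + A *v z \<omega>) + b \<bullet> (d + B *v z \<omega>))"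
    by (simp add: real_gaussian_affine_inner)
qed

end

lemma knockoff_estimator_eq:
  "(\<chi> j. (R *v (transpose X *v y)) $ j + R $ j $ j * (column j Xt \<bullet> y - column j X \<bullet> y))
     = (R ** transpose X + diag_part R ** (transpose Xt - transpose X)) *v y"
  by (simp add: vec_eq_iff inner_column diag_part_mult_vector_nth matrix_vector_mult_diff_rdistrib
      matrix_vector_mult_add_rdistrib matrix_vector_mul_assoc[symmetric] del: transpose_matrix_vector)

lemma ridge_gram:
  fixes R :: "real^'p^'p" and X :: "real^'p^'n"
  assumes "transpose R = R"
  shows "(R ** transpose X) ** transpose (R ** transpose X) = R ** (transpose X ** X) ** R"
  by (simp add: matrix_transpose_mul assms matrix_mul_assoc)

context
  fixes R D S :: "real^'p^'p" and X Xt :: "real^'p^'n"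
  assumes knockoff_gram: "transpose Xt ** X = transpose X ** X - S"
begin

lemma knockoff_ridge_design:
  "(R ** transpose X + D ** (transpose Xt - transpose X)) ** X = R ** (transpose X ** X) - D ** S"
  by (simp add: matrix_add_rdistrib matrix_diff_rdistrib matrix_diff_ldistrib matrix_mul_assoc[symmetric]
      knockoff_gram)

lemma knockoff_ridge_cross_gram:
  assumes "transpose R = R"
  shows "(R ** transpose X + D ** (transpose Xt - transpose X)) ** transpose (R ** transpose X)
    = R ** (transpose X ** X) ** R - D ** S ** R"
  using knockoff_ridge_design
  by (simp add: matrix_transpose_mul assms matrix_mul_assoc matrix_diff_rdistrib)

lemma knockoff_ridge_gram:
  assumes "transpose R = R" and "transpose D = D" and "transpose S = S"
  shows "(R ** transpose X + D ** (transpose Xt - transpose X))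
      ** transpose (R ** transpose X + D ** (transpose Xt - transpose X))
    = R ** (transpose X ** X) ** R - R ** S ** D - D ** S ** R
      + D ** (transpose Xt ** Xt - transpose X ** X + 2 *\<^sub>R S) ** D"
proof -
  have "transpose X ** Xt = transpose X ** X - S"
    using arg_cong[OF knockoff_gram, of transpose]
    by (simp add: matrix_transpose_mul transpose_diff assms(3))
  then have gram_left: "transpose X ** (Xt ** C) = transpose X ** (X ** C) - S ** C"
    and gram_right: "transpose Xt ** (X ** C) = transpose X ** (X ** C) - S ** C"
    for C :: "real^'p^'p"
    using knockoff_gram by (simp_all add: matrix_mul_assoc matrix_diff_rdistrib)
  \<comment> \<open>all products are normalised to right-nested form, where the two Gram identities apply\<close>
  show ?thesis
    unfolding scaleR_2
    by (simp only: matrix_mul_assoc[symmetric] matrix_add_rdistrib matrix_add_ldistrib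
        matrix_diff_rdistrib matrix_diff_ldistrib matrix_transpose_mul transpose_add transpose_diff
        transpose_transpose assms gram_left gram_right)
      (simp add: algebra_simps)
qed

end

theorem proposition2p1:
  fixes M :: "'a measure"
    and X Xt :: "real^'p::finite^'n::finite"
    and \<beta> s :: "real^'p"
    and z :: "'a \<Rightarrow> real^'n"
    and \<sigma> lam :: real
  assumes "prob_space M"
    and "\<sigma> > 0"
    and "prob_space.indep_vars M (\<lambda>_. borel) (\<lambda>i \<omega>. z \<omega> $ i) UNIV"
    and "\<And>i. distributed M lborel (\<lambda>\<omega>. z \<omega> $ i) (normal_density 0 \<sigma>)"
    and "rank X = CARD('p)"
    and "\<And>j. norm (column j X) = 1"
    and "lam > 0"
    and "\<And>j. s $ j \<ge> 0"
    and "psd (transpose X ** X - diag_mat s)"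
    and "transpose Xt ** X = transpose X ** X - diag_mat s"
    and "\<And>j. column j Xt \<bullet> column j Xt = 1"
  defines "Sig \<equiv> transpose X ** X"
    and "S \<equiv> diag_mat s"
  defines "SL \<equiv> Sig + lam *\<^sub>R mat 1"
  defines "SLi \<equiv> matrix_inv SL"
  defines "y \<equiv> (\<lambda>\<omega>. X *v \<beta> + z \<omega>)"
  defines "\<beta>hat \<equiv> (\<lambda>\<omega>. SLi *v (transpose X *v y \<omega>))"
  defines "\<beta>tilde \<equiv> (\<lambda>\<omega>. \<chi> j. \<beta>hat \<omega> $ j
                 + SLi $ j $ j * (column j Xt \<bullet> y \<omega> - column j X \<bullet> y \<omega>))"
  shows "jointly_gaussian M \<beta>hat \<beta>tilde
    \<and> mean_vec M \<beta>hat = (SLi ** Sig) *v \<beta>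
    \<and> mean_vec M \<beta>tilde = (SLi ** Sig - diag_part SLi ** S) *v \<beta>
    \<and> cov_mat M \<beta>hat \<beta>hat = \<sigma>\<^sup>2 *\<^sub>R (SLi ** Sig ** SLi)
    \<and> cov_mat M \<beta>tilde \<beta>tilde = \<sigma>\<^sup>2 *\<^sub>R (SLi ** Sig ** SLi
          - SLi ** S ** diag_part SLi
          - diag_part SLi ** S ** SLi
          + diag_part SLi ** (transpose Xt ** Xt - Sig + 2 *\<^sub>R S) ** diag_part SLi)
    \<and> cov_mat M \<beta>tilde \<beta>hat = \<sigma>\<^sup>2 *\<^sub>R (SLi ** Sig ** SLi - diag_part SLi ** S ** SLi)"
proof -
  interpret iid_normal_vector M \<sigma> z
    using assms(1-4) by (simp add: iid_normal_vector_def iid_normal_vector_axioms_def)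
  define D where "D = diag_part SLi"
  define A where "A = SLi ** transpose X"
  define B where "B = A + D ** (transpose Xt - transpose X)"
  have SLi_sym: "transpose SLi = SLi"
    unfolding SLi_def SL_def Sig_def
    by (rule transpose_matrix_inv_symmetric[OF invertible_gram_plus_scaled_id[OF \<open>lam > 0\<close>]])
      (simp add: transpose_add matrix_transpose_mul transpose_scalar)
  have knockoff_gram: "transpose Xt ** X = transpose X ** X - S"
    using assms(10) by (simp add: S_def)
  have hat: "\<beta>hat = (\<lambda>\<omega>. (SLi ** Sig) *v \<beta> + A *v z \<omega>)"
    by (simp add: \<beta>hat_def y_def A_def Sig_def matrix_vector_right_distrib matrix_vector_mul_assoc
        del: transpose_matrix_vector)
  have tilde: "\<beta>tilde = (\<lambda>\<omega>. (SLi ** Sig - D ** S) *v \<beta> + B *v z \<omega>)"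
    using knockoff_ridge_design[OF knockoff_gram, of SLi D]
    unfolding \<beta>tilde_def \<beta>hat_def knockoff_estimator_eq
    by (simp add: y_def A_def B_def D_def Sig_def matrix_vector_right_distrib matrix_vector_mul_assoc)
  show ?thesis
    unfolding D_def[symmetric] hat tilde
    using ridge_gram[OF SLi_sym, of X] knockoff_ridge_cross_gram[OF knockoff_gram SLi_sym, of D]
      knockoff_ridge_gram[OF knockoff_gram SLi_sym, of D]
    by (simp add: mean_vec_affine cov_mat_affine jointly_gaussian_affine A_def B_def Sig_def
        D_def S_def transpose_diag_part transpose_diag_mat)
qed

end
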